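(* Let $X$ be a $\mathbb{P}^1(\mathbb{R})$-valued random variable satisfying $X\sim \frac1X+\epsilon$, where $\epsilon\sim\mathrm{Bernoulli}(1/2)$ is independent of $X$. Then for every integer $n\ge 0$, \[ \mathbb{E}[\log X]=\frac{1}{(n+6)2^n}\,\mathbb{E}\Big[\log\Big(\prod_{k=1}^{2^n}\big(a_n^kX+b_n^k\big)\Big)\Big]. \]
   Context: $\mathbb{P}^1(\mathbb{R})$ is identified with $\mathbb{R}\cup\{\infty\}$ (with $1/0=\infty$, $1/\infty=0$). The law of such $X$ is unique, atomless, $X\in(0,\infty)$ a.s., and $0<\mathbb{E}[\log X]<\infty$. The integers $a_n^k,b_n^k$ ($n\ge0$, $1\le k\le 2^n$) are defined recursively by $a_0^1=2$, $b_0^1=1$ and, for $n\ge 0$, $(a_{n+1}^k,b_{n+1}^k)=(a_n^k+b_n^k,\ a_n^k)$ for $k=1,\dots,2^n$, and $(a_{n+1}^k,b_{n+1}^k)=(b_n^{k-2^n},\ a_n^{k-2^n})$ for $k=2^n+1,\dots,2^{n+1}$. *)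

theory Defs
  imports "HOL-Probability.Probability"
begin

text \<open>The real projective line P^1(R) = R \<union> {\<infinity>}, represented as real option,
  with None standing for the point \<infinity>.\<close>

definition P1 :: "real option measure" where
  "P1 = sigma UNIV {A. Some -` A \<in> sets (borel :: real measure)}"

fun inv1 :: "real option \<Rightarrow> real option" where
  "inv1 None = Some 0"
| "inv1 (Some x) = (if x = 0 then None else Some (1 / x))"

definition addP1 :: "real option \<Rightarrow> real \<Rightarrow> real option" where
  "addP1 x e = map_option (\<lambda>t. t + e) x"

text \<open>Finite coordinate (the value at \<infinity> is irrelevant: X is finite a.s.).\<close>
definition fin1 :: "real option \<Rightarrow> real" where
  "fin1 x = (case x of None \<Rightarrow> 0 | Some t \<Rightarrow> t)"

fun ab :: "nat \<Rightarrow> nat \<Rightarrow> nat \<times> nat" where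
  "ab 0 k = (2, 1)"
| "ab (Suc n) k =
     (if k \<le> 2 ^ n then (fst (ab n k) + snd (ab n k), fst (ab n k))
      else (snd (ab n (k - 2 ^ n)), fst (ab n (k - 2 ^ n))))"

definition a_seq :: "nat \<Rightarrow> nat \<Rightarrow> nat" where "a_seq n k = fst (ab n k)"
definition b_seq :: "nat \<Rightarrow> nat \<Rightarrow> nat" where "b_seq n k = snd (ab n k)"

end

(*
  The law of X is stationary for the random map x \<mapsto> 1/x + \<epsilon>:
  E g(X) = (E g(1/X + 1) + E g(1/X)) / 2.  Comparing the masses of {\<infinity>} \<union> (-\<infinity>,0], [-1,0]
  and {-1} under this identity shows X > 0 a.s., and applying it to truncations of X and 1/X
  shows that both are integrable, so all log-moments f(a,b) = E log(aX + b) are finite.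
  Since a(1/x + 1) + b = ((a+b)x + a)/x and a/x + b = (bx + a)/x, stationarity of log(aX + b) gives
  f(a,b) = (f(a+b,a) + f(b,a))/2 - E log X, whence f(1,1) = 4 E log X and f(2,1) = 6 E log X.
  The pairs (a_n^k, b_n^k) arise from (2,1) by the same two moves (a,b) \<mapsto> (a+b,a), (b,a), so
  by induction the sum of f(a_n^k, b_n^k) over k is (n+6) 2^n E log X.
*)

theory Submission
  imports Defs
begin

lemma enn2real_half_add:
  fixes a b :: ennreal
  assumes "a \<noteq> top" and "b \<noteq> top"
  shows "enn2real (1/2 * a + 1/2 * b) = (enn2real a + enn2real b) / 2"
proof -
  have half: "(1/2 :: ennreal) = ennreal (1/2)"
    by (metis ennreal_1 ennreal_divide_numeral zero_le_one)
  have "enn2real (ennreal (1/2) * a + ennreal (1/2) * b)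
      = enn2real (ennreal (1/2)) * enn2real a + enn2real (ennreal (1/2)) * enn2real b"
    using assms ennreal_less_top[of "1/2"]
    by (subst enn2real_plus) (auto simp: ennreal_mult_less_top top.not_eq_extremum enn2real_mult simp del: ennreal_half)
  then show ?thesis
    unfolding half by (simp del: ennreal_half)
qed

lemma integrable_of_truncations_bounded:
  fixes f :: "'a \<Rightarrow> real"
  assumes "finite_measure N" and [measurable]: "f \<in> borel_measurable N"
    and nonneg: "AE x in N. 0 \<le> f x"
    and bounded: "\<And>n::nat. (\<integral>x. min (f x) (real n) \<partial>N) \<le> C"
  shows "integrable N f"
proof -
  interpret finite_measure N
    by fact
  have integrable_trunc: "integrable N (\<lambda>x. min (f x) (real n))" for n :: nat
    by (rule integrable_const_bound[where B = "real n"]) (use nonneg in auto)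
  have "(\<lambda>n. \<integral>\<^sup>+x. ennreal (min (f x) (real n)) \<partial>N) \<longlonglongrightarrow> (\<integral>\<^sup>+x. ennreal (f x) \<partial>N)"
  proof (rule nn_integral_LIMSEQ)
    show "incseq (\<lambda>n x. ennreal (min (f x) (real n)))"
      by (auto simp: incseq_def le_fun_def intro!: ennreal_leI)
    show "(\<lambda>n. ennreal (min (f x) (real n))) \<longlonglongrightarrow> ennreal (f x)" for x
    proof (intro tendsto_ennrealI tendsto_eventually)
      show "\<forall>\<^sub>F n in sequentially. min (f x) (real n) = f x"
        using eventually_ge_at_top[of "nat \<lceil>f x\<rceil>"]
        by eventually_elim (use real_nat_ceiling_ge[of "f x"] in linarith)
    qed
  qed simp
  moreover have "(\<integral>\<^sup>+x. ennreal (min (f x) (real n)) \<partial>N) \<le> ennreal C" for n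
    using nonneg bounded[of n]
    by (subst nn_integral_eq_integral[OF integrable_trunc]) (auto elim: eventually_mono intro: ennreal_leI)
  ultimately have "(\<integral>\<^sup>+x. ennreal (f x) \<partial>N) \<le> ennreal C"
    by (blast intro: LIMSEQ_le_const2)
  then show ?thesis
    using nonneg by (intro integrableI_nonneg) (auto intro: le_less_trans)
qed

lemma sets_P1: "sets P1 = {A. Some -` A \<in> sets (borel :: real measure)}"
proof -
  let ?S = "{A. Some -` A \<in> sets (borel :: real measure)}"
  have "sigma_algebra UNIV ?S"
    unfolding sigma_algebra_iff2 by (auto simp: vimage_Diff vimage_Union)
  then show ?thesis
    unfolding P1_def by (simp add: sigma_algebra.sigma_sets_eq)
qed

lemma space_P1 [simp]: "space P1 = UNIV"
  by (simp add: P1_def)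

lemma fin1_Some [simp]: "fin1 (Some t) = t" and fin1_None [simp]: "fin1 None = 0"
  by (simp_all add: fin1_def)

lemma measurable_fin1 [measurable]: "fin1 \<in> borel_measurable P1"
proof (rule measurableI)
  fix S :: "real set" assume "S \<in> sets borel"
  moreover have "Some -` (fin1 -` S) = S" by auto
  ultimately show "fin1 -` S \<inter> space P1 \<in> sets P1" by (simp add: sets_P1)
qed simp

definition inv_plus :: "real \<Rightarrow> real option \<Rightarrow> real option" where
  "inv_plus c x = addP1 (inv1 x) c"

lemma inv_plus_None [simp]: "inv_plus c None = Some c"
  and inv_plus_Some [simp]: "inv_plus c (Some t) = (if t = 0 then None else Some (1 / t + c))"
  by (simp_all add: inv_plus_def addP1_def)

lemma fin1_inv_plus: "x \<noteq> Some 0 \<Longrightarrow> fin1 (inv_plus c x) = 1 / fin1 x + c"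
  by (cases x) auto

lemma measurable_inv_plus [measurable]: "inv_plus c \<in> measurable P1 P1"
proof (rule measurableI)
  fix A assume "A \<in> sets P1"
  then have A: "Some -` A \<in> sets borel" by (simp add: sets_P1)
  have "Some -` (inv_plus c -` A) = {t. t \<noteq> 0 \<and> 1 / t + c \<in> Some -` A} \<union> (if None \<in> A then {0} else {})"
    by (auto split: if_splits)
  moreover have "{t. t \<noteq> 0 \<and> 1 / t + c \<in> Some -` A} \<in> sets borel"
    using A by measurable
  ultimately show "inv_plus c -` A \<inter> space P1 \<in> sets P1"
    by (simp add: sets_P1)
qed simp

locale inv_plus_bernoulli_law = prob_space M
  for M :: "'s measure" and X :: "'s \<Rightarrow> real option" and \<epsilon> :: "'s \<Rightarrow> bool" +
  assumes measurable_X [measurable]: "X \<in> measurable M P1"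
    and measurable_eps [measurable]: "\<epsilon> \<in> measurable M (count_space UNIV)"
    and distr_eps: "distr M (count_space UNIV) \<epsilon> = measure_pmf (bernoulli_pmf (1/2))"
    and indep: "\<forall>A\<in>sets P1. \<forall>B::bool set.
         measure M ({\<omega>\<in>space M. X \<omega> \<in> A} \<inter> {\<omega>\<in>space M. \<epsilon> \<omega> \<in> B}) =
         measure M {\<omega>\<in>space M. X \<omega> \<in> A} * measure M {\<omega>\<in>space M. \<epsilon> \<omega> \<in> B}"
    and distr_X_eq: "distr M P1 X = distr M P1 (\<lambda>\<omega>. addP1 (inv1 (X \<omega>)) (of_bool (\<epsilon> \<omega>)))"
begin

abbreviation \<mu> :: "real option measure" where
  "\<mu> \<equiv> distr M P1 X"

lemma prob_eps: "prob {\<omega>\<in>space M. \<epsilon> \<omega> \<in> {b}} = 1/2"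
proof -
  have "prob {\<omega>\<in>space M. \<epsilon> \<omega> \<in> {b}} = measure (distr M (count_space UNIV) \<epsilon>) {b}"
    by (subst measure_distr) (auto simp: vimage_def Int_def conj_commute)
  also have "\<dots> = 1/2"
    by (simp add: distr_eps measure_pmf_single)
  finally show ?thesis .
qed

text \<open>The only use of the independence of X and \<epsilon>: conditioning on \<epsilon> = b halves the law of X.\<close>

lemma distr_density_eps:
  "distr (density M (indicator {\<omega>\<in>space M. \<epsilon> \<omega> = b})) P1 X = density \<mu> (\<lambda>_. 1/2)"
  (is "?lhs = ?rhs")
proof (rule measure_eqI)
  fix A assume "A \<in> sets ?lhs"
  then have A [measurable]: "A \<in> sets P1" by simp
  let ?XA = "{\<omega>\<in>space M. X \<omega> \<in> A}" and ?E = "{\<omega>\<in>space M. \<epsilon> \<omega> \<in> {b}}"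
  have "emeasure ?lhs A
      = (\<integral>\<^sup>+\<omega>. indicator {\<omega>\<in>space M. \<epsilon> \<omega> = b} \<omega> * indicator (X -` A \<inter> space M) \<omega> \<partial>M)"
    by (simp add: emeasure_distr emeasure_density)
  also have "\<dots> = (\<integral>\<^sup>+\<omega>. indicator (?XA \<inter> ?E) \<omega> \<partial>M)"
    by (rule nn_integral_cong) (auto simp: indicator_def)
  also have "\<dots> = emeasure M (?XA \<inter> ?E)"
    by simp
  also have "\<dots> = ennreal (prob ?XA * (1/2))"
    using indep[rule_format, OF A, of "{b}"] unfolding prob_eps by (simp add: emeasure_eq_measure)
  also have "\<dots> = 1/2 * emeasure M ?XA"
    by (simp add: emeasure_eq_measure ennreal_divide_numeral ennreal_divide_times)
  also have "\<dots> = emeasure ?rhs A"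
    by (simp add: emeasure_density nn_integral_cmult_indicator emeasure_distr vimage_def Int_def conj_commute)
  finally show "emeasure ?lhs A = emeasure ?rhs A" .
qed simp

lemma nn_integral_eps_indicator:
  assumes [measurable]: "k \<in> borel_measurable P1"
  shows "(\<integral>\<^sup>+\<omega>. indicator {\<omega>\<in>space M. \<epsilon> \<omega> = b} \<omega> * k (X \<omega>) \<partial>M) = 1/2 * (\<integral>\<^sup>+x. k x \<partial>\<mu>)"
proof -
  have "(\<integral>\<^sup>+\<omega>. indicator {\<omega>\<in>space M. \<epsilon> \<omega> = b} \<omega> * k (X \<omega>) \<partial>M)
      = (\<integral>\<^sup>+x. k x \<partial>distr (density M (indicator {\<omega>\<in>space M. \<epsilon> \<omega> = b})) P1 X)"
    by (simp add: nn_integral_density nn_integral_distr)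
  also have "\<dots> = 1/2 * (\<integral>\<^sup>+x. k x \<partial>\<mu>)"
    by (simp add: distr_density_eps nn_integral_density nn_integral_cmult)
  finally show ?thesis .
qed

lemma measurable_inv_plus_eps [measurable]:
  "(\<lambda>\<omega>. inv_plus (of_bool (\<epsilon> \<omega>)) (X \<omega>)) \<in> measurable M P1"
proof -
  have "(\<lambda>\<omega>. inv_plus (of_bool (\<epsilon> \<omega>)) (X \<omega>))
      = (\<lambda>\<omega>. if \<epsilon> \<omega> then inv_plus 1 (X \<omega>) else inv_plus 0 (X \<omega>))"
    by auto
  then show ?thesis
    by simp
qed

lemma nn_integral_law_stationary:
  assumes [measurable]: "g \<in> borel_measurable P1"
  shows "(\<integral>\<^sup>+x. g x \<partial>\<mu>) = 1/2 * (\<integral>\<^sup>+x. g (inv_plus 1 x) \<partial>\<mu>) + 1/2 * (\<integral>\<^sup>+x. g (inv_plus 0 x) \<partial>\<mu>)"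
proof -
  let ?E = "\<lambda>b. {\<omega>\<in>space M. \<epsilon> \<omega> = b}"
  have "(\<integral>\<^sup>+x. g x \<partial>\<mu>) = (\<integral>\<^sup>+\<omega>. g (inv_plus (of_bool (\<epsilon> \<omega>)) (X \<omega>)) \<partial>M)"
    using distr_X_eq by (simp add: inv_plus_def[symmetric] nn_integral_distr)
  also have "\<dots> = (\<integral>\<^sup>+\<omega>. indicator (?E True) \<omega> * g (inv_plus 1 (X \<omega>))
                       + indicator (?E False) \<omega> * g (inv_plus 0 (X \<omega>)) \<partial>M)"
    by (rule nn_integral_cong) (simp split: split_indicator)
  also have "\<dots> = 1/2 * (\<integral>\<^sup>+x. g (inv_plus 1 x) \<partial>\<mu>) + 1/2 * (\<integral>\<^sup>+x. g (inv_plus 0 x) \<partial>\<mu>)"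
    using nn_integral_eps_indicator[of "\<lambda>x. g (inv_plus 1 x)" True]
      nn_integral_eps_indicator[of "\<lambda>x. g (inv_plus 0 x)" False]
    by (simp add: nn_integral_add)
  finally show ?thesis .
qed

lemma prob_space_law: "prob_space \<mu>"
  by (simp add: prob_space_distr)

lemma measure_law_stationary:
  assumes [measurable]: "A \<in> sets P1"
  shows "measure \<mu> A = (measure \<mu> (inv_plus 1 -` A) + measure \<mu> (inv_plus 0 -` A)) / 2"
proof -
  interpret law: prob_space \<mu>
    by (rule prob_space_law)
  have [measurable]: "inv_plus c -` A \<in> sets P1" for c
    using measurable_sets[OF measurable_inv_plus, of A c] by simp
  have "emeasure \<mu> A = 1/2 * emeasure \<mu> (inv_plus 1 -` A) + 1/2 * emeasure \<mu> (inv_plus 0 -` A)"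
    using nn_integral_law_stationary[of "indicator A"]
    by (simp add: indicator_vimage[symmetric])
  then show ?thesis
    by (simp add: measure_def enn2real_half_add law.emeasure_finite)
qed

lemma measure_law_le:
  assumes [measurable]: "A \<in> sets P1" "A1 \<in> sets P1" "A0 \<in> sets P1"
    and "inv_plus 1 -` A \<subseteq> A1" "inv_plus 0 -` A \<subseteq> A0"
  shows "2 * measure \<mu> A \<le> measure \<mu> A1 + measure \<mu> A0"
proof -
  interpret law: prob_space \<mu>
    by (rule prob_space_law)
  have [measurable]: "inv_plus c -` A \<in> sets P1" for c
    using measurable_sets[OF measurable_inv_plus, of A c] by simp
  show ?thesis
    using assms by (simp add: measure_law_stationary[of A] law.finite_measure_mono add_mono)
qed

lemma AE_law_pos: "AE x in \<mu>. \<exists>t>0. x = Some t"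
proof -
  \<comment> \<open>Stationarity gives \<mu> B \<le> \<mu> C, \<mu> C \<le> \<mu> B - \<mu> D and \<mu> N \<le> \<mu> D; since C = D \<union> N,
     all four masses vanish.\<close>
  interpret law: prob_space \<mu>
    by (rule prob_space_law)
  define B where "B = insert None (Some ` {..0::real})"
  define C where "C = Some ` {-1..0::real}"
  define D where "D = Some ` {-1<..0::real}"
  define N where "N = {Some (-1::real)}"
  have sets: "B \<in> sets P1" "C \<in> sets P1" "D \<in> sets P1" "N \<in> sets P1"
    by (auto simp: sets_P1 B_def C_def D_def N_def vimage_def inj_image_mem_iff)
  have "2 * measure \<mu> B \<le> measure \<mu> C + measure \<mu> B"
    by (rule measure_law_le[OF sets(1,2,1)]) (auto simp: subset_iff split_option_all B_def C_def field_simps divide_le_0_iff)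
  moreover have "2 * measure \<mu> C \<le> measure \<mu> C + measure \<mu> (B - D)"
    by (rule measure_law_le[OF sets(2,2) sets.Diff[OF sets(1,3)]])
      (auto simp: subset_iff split_option_all B_def C_def D_def field_simps divide_le_0_iff)
  moreover have "2 * measure \<mu> N \<le> measure \<mu> D + measure \<mu> N"
    by (rule measure_law_le[OF sets(4,3,4)]) (auto simp: subset_iff split_option_all D_def N_def field_simps divide_le_0_iff)
  moreover have "measure \<mu> (B - D) = measure \<mu> B - measure \<mu> D"
    by (rule law.finite_measure_Diff) (use sets in \<open>auto simp: B_def D_def\<close>)
  moreover have "measure \<mu> C \<le> measure \<mu> D + measure \<mu> N"
  proof -
    have "C = D \<union> N"
      by (auto simp: C_def D_def N_def)
    with sets show ?thesis
      by (simp add: measure_Un_le)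
  qed
  ultimately have "measure \<mu> B = 0"
    using measure_nonneg[of \<mu> B] by linarith
  with sets have "B \<in> null_sets \<mu>"
    by (simp add: law.emeasure_eq_measure null_sets_def)
  then show ?thesis
    by (rule AE_I') (auto simp: B_def subset_iff split_option_all not_less)
qed

end

lemma a_seq_Suc_le: "k \<le> 2 ^ n \<Longrightarrow> a_seq (Suc n) k = a_seq n k + b_seq n k"
  and b_seq_Suc_le: "k \<le> 2 ^ n \<Longrightarrow> b_seq (Suc n) k = a_seq n k"
  and a_seq_Suc_gt: "0 < k \<Longrightarrow> a_seq (Suc n) (k + 2 ^ n) = b_seq n k"
  and b_seq_Suc_gt: "0 < k \<Longrightarrow> b_seq (Suc n) (k + 2 ^ n) = a_seq n k"
  by (simp_all add: a_seq_def b_seq_def)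

lemma a_seq_b_seq_ge_1: "1 \<le> a_seq n k \<and> 1 \<le> b_seq n k"
proof (induction n arbitrary: k)
  case 0
  then show ?case
    by (simp add: a_seq_def b_seq_def)
next
  case (Suc n)
  show ?case
  proof (cases "k \<le> 2 ^ n")
    case True
    with Suc.IH[of k] show ?thesis
      by (simp add: a_seq_Suc_le b_seq_Suc_le)
  next
    case False
    then have "k = (k - 2 ^ n) + 2 ^ n" "0 < k - 2 ^ n"
      by simp_all
    with Suc.IH[of "k - 2 ^ n"] show ?thesis
      by (metis a_seq_Suc_gt b_seq_Suc_gt)
  qed
qed

lemma ln_affine_inv_plus:
  fixes a b c x :: real
  assumes "0 < a" "0 \<le> b" "0 \<le> c" "0 < x"
  shows "ln (a * (1/x + c) + b) = ln ((a * c + b) * x + a) - ln x"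
proof -
  have "a * (1/x + c) + b = ((a * c + b) * x + a) / x"
    using assms by (simp add: field_simps)
  moreover have "0 < (a * c + b) * x + a"
    using assms by (intro add_nonneg_pos mult_nonneg_nonneg add_nonneg_nonneg) auto
  ultimately show ?thesis
    using assms by (simp add: ln_div)
qed

locale inv_plus_stationary = prob_space \<nu> for \<nu> :: "real measure" +
  assumes sets_eq_borel [measurable_cong]: "sets \<nu> = sets borel"
    and AE_pos: "AE x in \<nu>. 0 < x"
    and nn_integral_stationary:
      "\<And>g. g \<in> borel_measurable borel \<Longrightarrow>
        (\<integral>\<^sup>+x. g x \<partial>\<nu>) = 1/2 * (\<integral>\<^sup>+x. g (1/x + 1) \<partial>\<nu>) + 1/2 * (\<integral>\<^sup>+x. g (1/x) \<partial>\<nu>)"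
begin

lemma integral_stationary:
  fixes g :: "real \<Rightarrow> real"
  assumes "integrable \<nu> g" "integrable \<nu> (\<lambda>x. g (1/x + 1))" "integrable \<nu> (\<lambda>x. g (1/x))"
  shows "(\<integral>x. g x \<partial>\<nu>) = ((\<integral>x. g (1/x + 1) \<partial>\<nu>) + (\<integral>x. g (1/x) \<partial>\<nu>)) / 2"
proof -
  have [measurable]: "g \<in> borel_measurable borel"
    using assms(1) by simp
  have finite: "(\<integral>\<^sup>+x. ennreal (f x) \<partial>\<nu>) \<noteq> top" "(\<integral>\<^sup>+x. ennreal (- f x) \<partial>\<nu>) \<noteq> top"
    if "integrable \<nu> f" for f :: "real \<Rightarrow> real"
    using that by (auto simp: real_integrable_def)
  show ?thesis
    using assms finite[OF assms(2)] finite[OF assms(3)]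
    by (simp add: real_lebesgue_integral_def nn_integral_stationary[of "\<lambda>x. ennreal (g x)"]
        nn_integral_stationary[of "\<lambda>x. ennreal (- g x)"] enn2real_half_add field_simps del: ennreal_half)
qed

lemma integrable_id_inverse: "integrable \<nu> (\<lambda>x. x)" "integrable \<nu> (\<lambda>x. 1/x)"
proof -
  \<comment> \<open>Stationarity gives 2 E min(X,n) \<le> 1 + 2 E min(1/X,n) and 2 E min(1/X,n) \<le> 1 + E min(X,n).\<close>
  have truncations_bounded:
    "(\<integral>x. min x (real n) \<partial>\<nu>) \<le> 2 \<and> (\<integral>x. min (1/x) (real n) \<partial>\<nu>) \<le> 3/2" for n
  proof -
    let ?t = "\<lambda>k. \<integral>x. min (k x) (real n) \<partial>\<nu>"
    have integrable: "integrable \<nu> (\<lambda>x. min (k x) (real n))"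
      if "k \<in> borel_measurable borel" "\<And>x. 0 < x \<Longrightarrow> 0 \<le> k x" for k
      using that AE_pos by (intro integrable_const_bound[where B = "real n"]) (auto elim!: eventually_mono)
    have "2 * ?t (\<lambda>x. x) = ?t (\<lambda>x. 1/x + 1) + ?t (\<lambda>x. 1/x)"
      using integral_stationary[of "\<lambda>x. min x (real n)"] integrable by simp
    moreover have "?t (\<lambda>x. 1/x + 1) \<le> (\<integral>x. 1 + min (1/x) (real n) \<partial>\<nu>)"
      using integrable by (intro integral_mono_AE) (auto intro: AE_pos[THEN eventually_mono])
    moreover have "(\<integral>x. 1 + min (1/x) (real n) \<partial>\<nu>) = 1 + ?t (\<lambda>x. 1/x)"
      using integrable prob_space by simp
    moreover have "2 * ?t (\<lambda>x. 1/x) = ?t (\<lambda>x. 1/(1/x + 1)) + ?t (\<lambda>x. x)"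
      using integral_stationary[of "\<lambda>x. min (1/x) (real n)"] integrable by simp
    moreover have "?t (\<lambda>x. 1/(1/x + 1)) \<le> (\<integral>x. 1 \<partial>\<nu>)"
      using integrable
      by (intro integral_mono_AE) (auto intro!: AE_pos[THEN eventually_mono] simp: min_le_iff_disj field_simps)
    moreover have "(\<integral>x. 1 \<partial>\<nu>) = (1::real)"
      using prob_space by simp
    ultimately show ?thesis
      by linarith
  qed
  show "integrable \<nu> (\<lambda>x. x)"
    by (rule integrable_of_truncations_bounded[where C = 2])
      (use truncations_bounded AE_pos in \<open>auto elim: eventually_mono\<close>)
  show "integrable \<nu> (\<lambda>x. 1/x)"
    by (rule integrable_of_truncations_bounded[where C = "3/2"])
      (use truncations_bounded AE_pos in \<open>auto elim: eventually_mono\<close>)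
qed

lemma integrable_ln: "integrable \<nu> ln"
proof (rule Bochner_Integration.integrable_bound)
  show "integrable \<nu> (\<lambda>x. x + 1/x)"
    using integrable_id_inverse by simp
  show "AE x in \<nu>. norm (ln x) \<le> norm (x + 1/x)"
    using AE_pos
  proof eventually_elim
    fix x :: real assume "0 < x"
    then have "ln x \<le> x - 1" "- ln x \<le> 1/x - 1" "0 < 1/x"
      using ln_le_minus_one[of x] ln_le_minus_one[of "1/x"] by (simp_all add: ln_div)
    with \<open>0 < x\<close> have "\<bar>ln x\<bar> \<le> x + 1/x"
      by (intro abs_leI) linarith+
    with \<open>0 < x\<close> show "norm (ln x) \<le> norm (x + 1/x)"
      by simp
  qed
qed simp

lemma integrable_ln_affine:
  assumes "0 \<le> a" "0 \<le> b"
  shows "integrable \<nu> (\<lambda>x. ln (a * x + b))"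
proof (cases "a = 0")
  case False
  with assms have "0 < a" by simp
  show ?thesis
  proof (rule Bochner_Integration.integrable_bound)
    show "integrable \<nu> (\<lambda>x. a * x + b + \<bar>ln a\<bar> + \<bar>ln x\<bar>)"
      using integrable_id_inverse integrable_ln by simp
    show "AE x in \<nu>. norm (ln (a * x + b)) \<le> norm (a * x + b + \<bar>ln a\<bar> + \<bar>ln x\<bar>)"
      using AE_pos
    proof eventually_elim
      fix x :: real assume "0 < x"
      with \<open>0 < a\<close> \<open>0 \<le> b\<close> have pos: "0 < a * x" "0 < a * x + b"
        by (simp_all add: add_pos_nonneg)
      have "ln a + ln x = ln (a * x)"
        using \<open>0 < a\<close> \<open>0 < x\<close> by (simp add: ln_mult)
      also have "\<dots> \<le> ln (a * x + b)"
        using pos \<open>0 \<le> b\<close> by simp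
      finally have "ln a + ln x \<le> ln (a * x + b)" .
      moreover have "ln (a * x + b) \<le> a * x + b - 1"
        using pos by (simp add: ln_le_minus_one)
      ultimately have "\<bar>ln (a * x + b)\<bar> \<le> a * x + b + \<bar>ln a\<bar> + \<bar>ln x\<bar>"
        using pos abs_ge_minus_self[of "ln a"] abs_ge_minus_self[of "ln x"] by (intro abs_leI) linarith+
      then show "norm (ln (a * x + b)) \<le> norm (a * x + b + \<bar>ln a\<bar> + \<bar>ln x\<bar>)"
        using pos by simp
    qed
  qed simp
qed simp

definition log_moment :: "real \<Rightarrow> real \<Rightarrow> real" where
  "log_moment a b = (\<integral>x. ln (a * x + b) \<partial>\<nu>)"

lemma integral_ln_affine_inv_plus:
  assumes "0 < a" "0 \<le> b" "0 \<le> c"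
  shows "integrable \<nu> (\<lambda>x. ln (a * (1/x + c) + b))"
    and "(\<integral>x. ln (a * (1/x + c) + b) \<partial>\<nu>) = log_moment (a * c + b) a - log_moment 1 0"
proof -
  have AE_eq: "AE x in \<nu>. ln ((a * c + b) * x + a) - ln (1 * x + 0) = ln (a * (1/x + c) + b)"
    using AE_pos by eventually_elim (simp add: ln_affine_inv_plus assms)
  have integrable: "integrable \<nu> (\<lambda>x. ln ((a * c + b) * x + a) - ln (1 * x + 0))"
    using assms by (intro Bochner_Integration.integrable_diff integrable_ln_affine) simp_all
  show "integrable \<nu> (\<lambda>x. ln (a * (1/x + c) + b))"
    by (rule integrable_cong_AE_imp[OF integrable _ AE_eq]) simp
  have "(\<integral>x. ln (a * (1/x + c) + b) \<partial>\<nu>) = (\<integral>x. ln ((a * c + b) * x + a) - ln (1 * x + 0) \<partial>\<nu>)"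
    using AE_eq by (intro integral_cong_AE) (auto elim: eventually_mono)
  also have "\<dots> = log_moment (a * c + b) a - log_moment 1 0"
    using integrable assms unfolding log_moment_def
    by (intro Bochner_Integration.integral_diff integrable_ln_affine) simp_all
  finally show "(\<integral>x. ln (a * (1/x + c) + b) \<partial>\<nu>) = log_moment (a * c + b) a - log_moment 1 0" .
qed

lemma log_moment_recurrence:
  assumes "0 < a" "0 \<le> b"
  shows "log_moment a b = (log_moment (a + b) a + log_moment b a) / 2 - log_moment 1 0"
  using integral_stationary[of "\<lambda>x. ln (a * x + b)"]
    integral_ln_affine_inv_plus[of a b 1] integral_ln_affine_inv_plus[of a b 0]
    integrable_ln_affine[of a b] assms
  by (simp add: log_moment_def[of a b] field_simps)

lemma log_moment_1_1: "log_moment 1 1 = 4 * log_moment 1 0"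
  using log_moment_recurrence[of 1 0] by (simp add: log_moment_def[of 0 1])

lemma log_moment_2_1: "log_moment 2 1 = 6 * log_moment 1 0"
  using log_moment_recurrence[of 1 1] log_moment_1_1 by simp

lemma sum_log_moment_ab:
  "(\<Sum>k\<in>{1..2^n}. log_moment (a_seq n k) (b_seq n k)) = (real n + 6) * 2 ^ n * log_moment 1 0"
proof (induction n)
  case 0
  then show ?case
    using log_moment_2_1 by (simp add: a_seq_def b_seq_def)
next
  case (Suc n)
  let ?f = "\<lambda>k. log_moment (a_seq (Suc n) k) (b_seq (Suc n) k)"
  have "{1..2 ^ Suc n} = {1..2 ^ n} \<union> {1 + 2 ^ n..2 ^ n + 2 ^ n::nat}"
    by auto
  then have "(\<Sum>k\<in>{1..2 ^ Suc n}. ?f k) = (\<Sum>k\<in>{1..2 ^ n}. ?f k) + (\<Sum>k\<in>{1 + 2 ^ n..2 ^ n + 2 ^ n}. ?f k)"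
    by (simp add: sum.union_disjoint del: One_nat_def)
  also have "\<dots> = (\<Sum>k\<in>{1..2 ^ n}. ?f k + ?f (k + 2 ^ n))"
    by (simp only: sum.shift_bounds_cl_nat_ivl sum.distrib)
  also have "\<dots> = (\<Sum>k\<in>{1..2 ^ n}. 2 * log_moment (a_seq n k) (b_seq n k) + 2 * log_moment 1 0)"
  proof (rule sum.cong)
    fix k :: nat assume "k \<in> {1..2 ^ n}"
    moreover have "0 < real (a_seq n k)"
      using a_seq_b_seq_ge_1[of n k] by simp
    ultimately show "?f k + ?f (k + 2 ^ n) = 2 * log_moment (a_seq n k) (b_seq n k) + 2 * log_moment 1 0"
      using log_moment_recurrence[of "real (a_seq n k)" "real (b_seq n k)"]
      by (simp add: a_seq_Suc_le b_seq_Suc_le a_seq_Suc_gt b_seq_Suc_gt)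
  qed simp
  also have "\<dots> = (real (Suc n) + 6) * 2 ^ Suc n * log_moment 1 0"
    using Suc.IH by (simp add: sum.distrib sum_distrib_left[symmetric] algebra_simps)
  finally show ?case .
qed

lemma integral_ln_prod_ab:
  "(\<integral>x. ln (\<Prod>k\<in>{1..2^n}. real (a_seq n k) * x + real (b_seq n k)) \<partial>\<nu>)
    = (real n + 6) * 2 ^ n * log_moment 1 0"
proof -
  have pos: "0 < real (a_seq n k) * x + real (b_seq n k)" if "0 < x" for k x
    using that a_seq_b_seq_ge_1[of n k] by (simp add: add_nonneg_pos)
  have "(\<integral>x. ln (\<Prod>k\<in>{1..2^n}. real (a_seq n k) * x + real (b_seq n k)) \<partial>\<nu>)
      = (\<integral>x. (\<Sum>k\<in>{1..2^n}. ln (real (a_seq n k) * x + real (b_seq n k))) \<partial>\<nu>)"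
    using AE_pos by (intro integral_cong_AE) (auto elim!: eventually_mono simp: ln_prod pos less_imp_neq[symmetric])
  also have "\<dots> = (\<Sum>k\<in>{1..2^n}. log_moment (a_seq n k) (b_seq n k))"
    by (simp add: log_moment_def integrable_ln_affine)
  also have "\<dots> = (real n + 6) * 2 ^ n * log_moment 1 0"
    by (rule sum_log_moment_ab)
  finally show ?thesis .
qed

end

context inv_plus_bernoulli_law
begin

sublocale fin1_law: inv_plus_stationary "distr \<mu> borel fin1"
proof (intro inv_plus_stationary.intro inv_plus_stationary_axioms.intro)
  show "prob_space (distr \<mu> borel fin1)"
    using prob_space_law by (rule prob_space.prob_space_distr) simp
  show "AE x in distr \<mu> borel fin1. 0 < x"
    using AE_law_pos by (subst AE_distr_iff) (auto elim!: eventually_mono)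
  fix g :: "real \<Rightarrow> ennreal" assume [measurable]: "g \<in> borel_measurable borel"
  have fin1_inv_plus_AE:
    "(\<integral>\<^sup>+x. g (fin1 (inv_plus c x)) \<partial>\<mu>) = (\<integral>\<^sup>+x. g (1 / fin1 x + c) \<partial>\<mu>)" for c
    using AE_law_pos by (intro nn_integral_cong_AE) (auto elim!: eventually_mono simp: fin1_inv_plus)
  have "(\<integral>\<^sup>+x. g x \<partial>distr \<mu> borel fin1) = (\<integral>\<^sup>+x. g (fin1 x) \<partial>\<mu>)"
    by (rule nn_integral_distr) simp_all
  also have "\<dots> = 1/2 * (\<integral>\<^sup>+x. g (1 / fin1 x + 1) \<partial>\<mu>) + 1/2 * (\<integral>\<^sup>+x. g (1 / fin1 x + 0) \<partial>\<mu>)"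
    unfolding fin1_inv_plus_AE[symmetric] by (rule nn_integral_law_stationary) simp
  finally show "(\<integral>\<^sup>+x. g x \<partial>distr \<mu> borel fin1)
      = 1/2 * (\<integral>\<^sup>+x. g (1/x + 1) \<partial>distr \<mu> borel fin1) + 1/2 * (\<integral>\<^sup>+x. g (1/x) \<partial>distr \<mu> borel fin1)"
    by (simp add: nn_integral_distr del: distr_distr)
qed simp

end

theorem lemma3p4:
  fixes M :: "'s measure" and X :: "'s \<Rightarrow> real option" and \<epsilon> :: "'s \<Rightarrow> bool" and n :: nat
  assumes "prob_space M"
    and "X \<in> measurable M P1"
    and "\<epsilon> \<in> measurable M (count_space UNIV)"
    and "distr M (count_space UNIV) \<epsilon> = measure_pmf (bernoulli_pmf (1/2))"
    and "\<forall>A\<in>sets P1. \<forall>B::bool set.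
         measure M ({\<omega>\<in>space M. X \<omega> \<in> A} \<inter> {\<omega>\<in>space M. \<epsilon> \<omega> \<in> B}) =
         measure M {\<omega>\<in>space M. X \<omega> \<in> A} * measure M {\<omega>\<in>space M. \<epsilon> \<omega> \<in> B}"
    and "distr M P1 X = distr M P1 (\<lambda>\<omega>. addP1 (inv1 (X \<omega>)) (of_bool (\<epsilon> \<omega>)))"
  shows "prob_space.expectation M (\<lambda>\<omega>. ln (fin1 (X \<omega>))) =
         1 / ((real n + 6) * 2 ^ n) *
         prob_space.expectation M
           (\<lambda>\<omega>. ln (\<Prod>k\<in>{1..2^n}. real (a_seq n k) * fin1 (X \<omega>) + real (b_seq n k)))"
proof -
  interpret inv_plus_bernoulli_law M X \<epsilon>
    by (intro inv_plus_bernoulli_law.intro inv_plus_bernoulli_law_axioms.intro) (fact assms)+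
  have transfer: "(\<integral>\<omega>. h (fin1 (X \<omega>)) \<partial>M) = (\<integral>x. h x \<partial>distr \<mu> borel fin1)"
    if [measurable]: "h \<in> borel_measurable borel" for h :: "real \<Rightarrow> real"
    by (simp add: integral_distr del: distr_distr)
  have "(\<integral>\<omega>. ln (fin1 (X \<omega>)) \<partial>M) = fin1_law.log_moment 1 0"
    by (simp add: transfer fin1_law.log_moment_def)
  moreover have "(\<integral>\<omega>. ln (\<Prod>k\<in>{1..2^n}. real (a_seq n k) * fin1 (X \<omega>) + real (b_seq n k)) \<partial>M)
      = (real n + 6) * 2 ^ n * fin1_law.log_moment 1 0"
    using transfer[of "\<lambda>x. ln (\<Prod>k\<in>{1..2^n}. real (a_seq n k) * x + real (b_seq n k))"]
      fin1_law.integral_ln_prod_ab[of n]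
    by simp
  ultimately show ?thesis
    by simp
qed

end
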